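(* Let $m$ be a positive integer and let $A,B$ be finite multisets of elements of $\{1,\dots,m\}$. If $\sum A\ge m^2$ and $\sum B\ge m^2$, then the pair $(A,B)$ is reducible, i.e., there exist a nonempty sub-multiset $A'\subseteq A$ and a nonempty sub-multiset $B'\subseteq B$ with $\sum A'=\sum B'$.
   Context: For a multiset $A$, $\sum A$ denotes the sum of its elements (counted with multiplicity). A pair of multisets $(A,B)$ is called reducible if the sum of some nonempty sub-multiset of $A$ equals the sum of some nonempty sub-multiset of $B$, and irreducible otherwise. *)

theory Defs
  imports "HOL-Library.Multiset"
begin

definition reducible :: "nat multiset \<Rightarrow> nat multiset \<Rightarrow> bool" where
  "reducible A B \<longleftrightarrow>
     (\<exists>A' B'. A' \<subseteq># A \<and> B' \<subseteq># B \<and> A' \<noteq> {#} \<and> B' \<noteq> {#} \<and> sum_mset A' = sum_mset B')"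

end

theory Submission
  imports Defs
begin

text \<open>List A and B as xs and ys. For each of the m + 1 prefixes of xs of length 0, ..., m,
  take the longest prefix of ys whose sum does not exceed it. The difference of the two sums lies
  in {0..<m}: the next entry of ys, at most m, would overshoot, and ys never runs out because its
  sum is at least m^2, which bounds the first m entries of xs. By pigeonhole two prefixes i < i'
  of xs leave the same difference, so the segments between the corresponding prefixes of xs and
  of ys have equal sums; the one of xs is nonempty, hence so is the one of ys.\<close>

lemma sum_list_take_eq_add_segment:
  "i \<le> j \<Longrightarrow> sum_list (take j xs) = sum_list (take i xs) + sum_list (drop i (take j xs))"
  by (metis min.absorb1 sum_list_append append_take_drop_id take_take)

lemma mset_segment_subseteq: "mset (drop i (take j xs)) \<subseteq># mset xs"
proof -
  have "mset xs = mset (take i (take j xs)) + mset (drop i (take j xs)) + mset (drop j xs)"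
    by (metis append_take_drop_id mset_append)
  then show ?thesis
    by (metis mset_subset_eq_add_left mset_subset_eq_add_right subset_mset.order_trans)
qed

lemma sum_list_take_le_mult:
  "\<forall>x\<in>set xs. x \<le> m \<Longrightarrow> sum_list (take i xs) \<le> i * (m::nat)"
proof (induction xs arbitrary: i)
  case Nil
  then show ?case by simp
next
  case (Cons a xs)
  then show ?case by (cases i) (auto simp: add_mono)
qed

definition longest_prefix_le :: "nat list \<Rightarrow> nat \<Rightarrow> nat" where
  "longest_prefix_le ys s = Max {j. j \<le> length ys \<and> sum_list (take j ys) \<le> s}"

lemma longest_prefix_le:
  shows "longest_prefix_le ys s \<le> length ys"
    and "sum_list (take (longest_prefix_le ys s) ys) \<le> s"
    and "j \<le> length ys \<Longrightarrow> sum_list (take j ys) \<le> s \<Longrightarrow> j \<le> longest_prefix_le ys s"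
proof -
  let ?J = "{j. j \<le> length ys \<and> sum_list (take j ys) \<le> s}"
  have fin: "finite ?J" and nonempty: "?J \<noteq> {}" by auto
  have "longest_prefix_le ys s \<in> ?J"
    unfolding longest_prefix_le_def using fin nonempty by (rule Max_in)
  moreover have "j \<le> longest_prefix_le ys s" if "j \<in> ?J" for j
    unfolding longest_prefix_le_def using fin that by (rule Max_ge)
  ultimately show "longest_prefix_le ys s \<le> length ys"
    and "sum_list (take (longest_prefix_le ys s) ys) \<le> s"
    and "j \<le> length ys \<Longrightarrow> sum_list (take j ys) \<le> s \<Longrightarrow> j \<le> longest_prefix_le ys s"
    by auto
qed

lemma longest_prefix_le_mono:
  "s \<le> t \<Longrightarrow> longest_prefix_le ys s \<le> longest_prefix_le ys t"
  using longest_prefix_le(1,2)[of ys s] longest_prefix_le(3)[where ys = ys and s = t] by simp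

lemma longest_prefix_le_gap:
  assumes "\<forall>y\<in>set ys. y \<le> m" and "0 < m" and "s \<le> sum_list ys"
  shows "s - sum_list (take (longest_prefix_le ys s) ys) < m"
proof (cases "longest_prefix_le ys s < length ys")
  case True
  let ?j = "longest_prefix_le ys s"
  have "\<not> sum_list (take (Suc ?j) ys) \<le> s"
    using longest_prefix_le(3)[of "Suc ?j" ys s] True by auto
  moreover have "sum_list (take (Suc ?j) ys) = sum_list (take ?j ys) + ys ! ?j"
    using True by (simp add: take_Suc_conv_app_nth)
  moreover have "ys ! ?j \<le> m"
    using assms(1) True by auto
  ultimately show ?thesis using assms(2) by linarith
next
  case False
  then have "sum_list (take (longest_prefix_le ys s) ys) = sum_list ys"
    using longest_prefix_le(1)[of ys s] by simp
  then show ?thesis using assms(2,3) by simp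
qed

lemma pigeonhole_atMost:
  assumes "\<And>i. i \<le> m \<Longrightarrow> f i < (m::nat)"
  obtains i i' where "i < i'" "i' \<le> m" "f i = f i'"
proof -
  have "f ` {..m} \<subseteq> {..<m}" using assms by auto
  then have "card (f ` {..m}) < card {..m}"
    by (metis card_atMost card_lessThan card_mono finite_lessThan le_imp_less_Suc)
  then have "\<not> inj_on f {..m}" by (rule pigeonhole)
  then obtain a b where "a \<le> m" "b \<le> m" "a \<noteq> b" "f a = f b"
    unfolding inj_on_def by auto
  then show ?thesis
    using that by (metis linorder_neqE_nat)
qed

lemma reducible_if_take_sum_le:
  fixes xs ys :: "nat list"
  assumes xs_pos: "\<forall>x\<in>set xs. 0 < x" and ys_le: "\<forall>y\<in>set ys. y \<le> m"
    and "0 < m" and "m \<le> length xs" and "sum_list (take m xs) \<le> sum_list ys"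
  shows "reducible (mset xs) (mset ys)"
proof -
  define SA where "SA i = sum_list (take i xs)" for i
  define J where "J i = longest_prefix_le ys (SA i)" for i
  define SB where "SB i = sum_list (take (J i) ys)" for i
  have SA_mono: "SA i \<le> SA i'" if "i \<le> i'" for i i'
    unfolding SA_def using sum_list_take_eq_add_segment[OF that, of xs] by simp
  have "SA i - SB i < m" if "i \<le> m" for i
    unfolding SB_def J_def
    using longest_prefix_le_gap[OF ys_le \<open>0 < m\<close>] SA_mono[OF that] assms(5)
    by (simp add: SA_def)
  then obtain i i' where ii': "i < i'" "i' \<le> m" "SA i - SB i = SA i' - SB i'"
    by (rule pigeonhole_atMost)
  have J_mono: "J i \<le> J i'"
    unfolding J_def using SA_mono ii' by (simp add: longest_prefix_le_mono)
  define A' where "A' = mset (drop i (take i' xs))"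
  define B' where "B' = mset (drop (J i) (take (J i') ys))"
  have "SA i' = SA i + sum_mset A'"
    unfolding SA_def A'_def using sum_list_take_eq_add_segment[OF less_imp_le[OF ii'(1)], of xs]
    by (simp add: sum_mset_sum_list)
  moreover have "SB i' = SB i + sum_mset B'"
    unfolding SB_def B'_def using sum_list_take_eq_add_segment[OF J_mono]
    by (simp add: sum_mset_sum_list)
  moreover have "SB i \<le> SA i" "SB i' \<le> SA i'"
    unfolding SB_def J_def by (simp_all add: longest_prefix_le(2))
  ultimately have sums_eq: "sum_mset A' = sum_mset B'"
    using ii'(3) by linarith
  have "A' \<noteq> {#}"
    unfolding A'_def using ii' \<open>m \<le> length xs\<close> by simp
  moreover have "\<forall>x\<in>#A'. 0 < x"
    unfolding A'_def using xs_pos by (auto dest: in_set_dropD in_set_takeD)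
  ultimately have "0 < sum_mset A'"
    by (metis multiset_nonemptyE sum_mset_0_iff not_gr0)
  then have "B' \<noteq> {#}" using sums_eq by auto
  moreover have "A' \<subseteq># mset xs" "B' \<subseteq># mset ys"
    unfolding A'_def B'_def by (rule mset_segment_subseteq)+
  ultimately show ?thesis
    unfolding reducible_def using \<open>A' \<noteq> {#}\<close> sums_eq by blast
qed

theorem lemma1:
  fixes m :: nat and A B :: "nat multiset"
  assumes "m \<ge> 1"
    and "set_mset A \<subseteq> {1..m}" and "set_mset B \<subseteq> {1..m}"
    and "sum_mset A \<ge> m^2" and "sum_mset B \<ge> m^2"
  shows "reducible A B"
proof -
  obtain xs ys where A: "A = mset xs" and B: "B = mset ys"
    by (metis ex_mset)
  have xs_pos: "\<forall>x\<in>set xs. 0 < x" and xs_le: "\<forall>x\<in>set xs. x \<le> m"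
    and ys_le: "\<forall>y\<in>set ys. y \<le> m"
    using assms(2,3) by (auto simp: A B)
  have sum_xs: "m * m \<le> sum_list xs" and sum_ys: "m * m \<le> sum_list ys"
    using assms(4,5) by (simp_all add: A B sum_mset_sum_list power2_eq_square)
  have "sum_list xs \<le> length xs * m"
    using sum_list_take_le_mult[OF xs_le, of "length xs"] by simp
  with sum_xs have "m * m \<le> length xs * m"
    by (rule order_trans)
  then have "m \<le> length xs"
    using assms(1) by simp
  moreover have "sum_list (take m xs) \<le> sum_list ys"
    using sum_list_take_le_mult[OF xs_le, of m] sum_ys by linarith
  ultimately show ?thesis
    unfolding A B using reducible_if_take_sum_le[OF xs_pos ys_le] assms(1) by simp
qed

end
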